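(* Let $n\geq 2$ and let $A$ be an $L_n$-good $n\times n$ matrix with $A_{i,j}=1$. If $A_{i',k}=1$ where $i'\equiv i-1$ or $i'\equiv i+1 \pmod n$, then $k\equiv j-1$ or $k\equiv j+1\pmod n$. (Here row and column indices are taken modulo $n$ in $\{1,\ldots,n\}$, so that index $0$ means $n$ and index $n+1$ means $1$.)
   Context: For $n\geq 2$, $L_n$ is the set of vectors $\vec{x}=(x_1,\ldots,x_n)\in\mathbb{Z}_2^n$ with no $i\in\{1,\ldots,n-1\}$ such that $x_i=x_{i+1}=1$, and with not both $x_1=1$ and $x_n=1$. An $n\times n$ matrix $A$ over $\mathbb{Z}_2$ is $L_n$-good if it is invertible and $A\vec{x}\in L_n$ for all $\vec{x}\in L_n$. $A_{i,j}$ denotes the $(i,j)$ entry of $A$. *)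

theory Defs
  imports Main "HOL-Library.Z2" "HOL-Number_Theory.Cong"
begin

text \<open>Vectors in Z_2^n are functions nat => bit, indexed by {1..n} (values outside
  are irrelevant). n x n matrices over Z_2 are functions nat => nat => bit indexed by
  {1..n} x {1..n}.\<close>

definition mat_vec :: "nat \<Rightarrow> (nat \<Rightarrow> nat \<Rightarrow> bit) \<Rightarrow> (nat \<Rightarrow> bit) \<Rightarrow> (nat \<Rightarrow> bit)" where
  "mat_vec n A x = (\<lambda>i. \<Sum>j\<in>{1..n}. A i j * x j)"

definition mat_mul :: "nat \<Rightarrow> (nat \<Rightarrow> nat \<Rightarrow> bit) \<Rightarrow> (nat \<Rightarrow> nat \<Rightarrow> bit) \<Rightarrow> (nat \<Rightarrow> nat \<Rightarrow> bit)" where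
  "mat_mul n A B = (\<lambda>i k. \<Sum>j\<in>{1..n}. A i j * B j k)"

definition invertible_mat :: "nat \<Rightarrow> (nat \<Rightarrow> nat \<Rightarrow> bit) \<Rightarrow> bool" where
  "invertible_mat n A \<longleftrightarrow> (\<exists>B. \<forall>i\<in>{1..n}. \<forall>k\<in>{1..n}.
      mat_mul n A B i k = (if i = k then 1 else 0) \<and>
      mat_mul n B A i k = (if i = k then 1 else 0))"

definition in_L :: "nat \<Rightarrow> (nat \<Rightarrow> bit) \<Rightarrow> bool" where
  "in_L n x \<longleftrightarrow> (\<forall>i\<in>{1..n-1}. \<not> (x i = 1 \<and> x (i+1) = 1)) \<and> \<not> (x 1 = 1 \<and> x n = 1)"

definition L_good :: "nat \<Rightarrow> (nat \<Rightarrow> nat \<Rightarrow> bit) \<Rightarrow> bool" where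
  "L_good n A \<longleftrightarrow> invertible_mat n A \<and> (\<forall>x. in_L n x \<longrightarrow> in_L n (mat_vec n A x))"

definition cyc_adj :: "nat \<Rightarrow> nat \<Rightarrow> nat \<Rightarrow> bool" where
  "cyc_adj n i i' \<longleftrightarrow> [int i' = int i - 1] (mod int n) \<or> [int i' = int i + 1] (mod int n)"

end

theory Submission
  imports Defs
begin

text \<open>Every column of \<open>A\<close> is the image of a unit vector and hence lies in \<open>L\<^sub>n\<close>. Since \<open>i\<close>
  and \<open>i'\<close> are adjacent, this forces \<open>A i' j = 0\<close> and \<open>A i k = 0\<close>, so \<open>j \<noteq> k\<close>. If \<open>j\<close> and
  \<open>k\<close> were not adjacent, \<open>e\<^sub>j + e\<^sub>k\<close> would lie in \<open>L\<^sub>n\<close>, yet its image, the sum of columns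
  \<open>j\<close> and \<open>k\<close>, has ones at the adjacent positions \<open>i\<close> and \<open>i'\<close>.\<close>

lemma dvd_bounded_int_cases:
  fixes m d :: int
  assumes "0 < m" "m dvd d" "\<bar>d\<bar> \<le> m"
  shows "d = - m \<or> d = 0 \<or> d = m"
proof -
  obtain c where d: "d = m * c"
    using assms(2) by (rule dvdE)
  have "\<bar>c\<bar> \<le> 1"
    using assms(1,3) unfolding d abs_mult by (simp add: mult_le_cancel_left1)
  then have "c = -1 \<or> c = 0 \<or> c = 1"
    by auto
  then show ?thesis
    unfolding d by auto
qed

lemma cyc_adj_iff:
  assumes "n \<ge> 2" "i \<in> {1..n}" "i' \<in> {1..n}"
  shows "cyc_adj n i i' \<longleftrightarrow> i' = i + 1 \<or> i = i' + 1 \<or> (i = 1 \<and> i' = n) \<or> (i = n \<and> i' = 1)"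
proof -
  have pos: "0 < int n" and bounds: "\<bar>int i' - (int i - 1)\<bar> \<le> int n" "\<bar>int i' - (int i + 1)\<bar> \<le> int n"
    using assms by auto
  have pred: "int n dvd int i' - (int i - 1) \<longleftrightarrow> i = i' + 1 \<or> (i = 1 \<and> i' = n)"
  proof
    assume "int n dvd int i' - (int i - 1)"
    then show "i = i' + 1 \<or> (i = 1 \<and> i' = n)"
      using dvd_bounded_int_cases[OF pos _ bounds(1)] assms by auto
  qed (auto simp: of_nat_diff)
  have succ: "int n dvd int i' - (int i + 1) \<longleftrightarrow> i' = i + 1 \<or> (i = n \<and> i' = 1)"
  proof
    assume "int n dvd int i' - (int i + 1)"
    then show "i' = i + 1 \<or> (i = n \<and> i' = 1)"
      using dvd_bounded_int_cases[OF pos _ bounds(2)] assms by auto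
  qed auto
  show ?thesis
    unfolding cyc_adj_def cong_iff_dvd_diff pred succ by blast
qed

lemma not_cyc_adj_refl:
  assumes "n \<ge> 2" "i \<in> {1..n}"
  shows "\<not> cyc_adj n i i"
  using cyc_adj_iff[OF assms assms(2)] assms by auto

lemma in_L_no_adjacent_ones:
  assumes "n \<ge> 2" "in_L n x" "i \<in> {1..n}" "i' \<in> {1..n}" "cyc_adj n i i'"
  shows "\<not> (x i = 1 \<and> x i' = 1)"
proof -
  have step: "\<not> (x t = 1 \<and> x (t + 1) = 1)" if "t \<in> {1..n-1}" for t
    using assms(2) that unfolding in_L_def by blast
  have wrap: "\<not> (x 1 = 1 \<and> x n = 1)"
    using assms(2) unfolding in_L_def by blast
  consider "i' = i + 1" | "i = i' + 1" | "i = 1 \<and> i' = n" | "i = n \<and> i' = 1"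
    using assms(5) cyc_adj_iff[OF assms(1,3,4)] by blast
  then show ?thesis
  proof cases
    case 1
    then show ?thesis using step[of i] assms(3,4) by auto
  next
    case 2
    then show ?thesis using step[of i'] assms(3,4) by auto
  qed (use wrap in auto)
qed

lemma in_L_indicator_pair:
  assumes "n \<ge> 2" "j \<in> {1..n}" "k \<in> {1..n}" "\<not> cyc_adj n j k"
  shows "in_L n (\<lambda>t. if t \<in> {j, k} then 1 else 0)"
proof -
  have "\<not> (t \<in> {j, k} \<and> t + 1 \<in> {j, k})" if "t \<in> {1..n-1}" for t
    using assms not_cyc_adj_refl[OF assms(1)] that unfolding cyc_adj_iff[OF assms(1-3)] by auto
  moreover have "\<not> (1 \<in> {j, k} \<and> n \<in> {j, k})"
    using assms unfolding cyc_adj_iff[OF assms(1-3)] by auto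
  moreover have indicator_eq_one: "(if P then 1 else 0) = (1::bit) \<longleftrightarrow> P" for P
    by simp
  ultimately show ?thesis
    unfolding in_L_def indicator_eq_one by blast
qed

lemma mat_vec_indicator:
  assumes "S \<subseteq> {1..n}"
  shows "mat_vec n A (\<lambda>t. if t \<in> S then 1 else 0) = (\<lambda>i. \<Sum>t\<in>S. A i t)"
proof
  fix i
  have "mat_vec n A (\<lambda>t. if t \<in> S then 1 else 0) i = (\<Sum>t\<in>{1..n}. if t \<in> S then A i t else 0)"
    unfolding mat_vec_def by (rule sum.cong) auto
  also have "\<dots> = (\<Sum>t\<in>{1..n} \<inter> S. A i t)"
    by (simp add: sum.inter_restrict)
  finally show "mat_vec n A (\<lambda>t. if t \<in> S then 1 else 0) i = (\<Sum>t\<in>S. A i t)"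
    using assms by (simp add: Int_absorb1)
qed

lemma L_good_column_in_L:
  assumes "n \<ge> 2" "L_good n A" "j \<in> {1..n}"
  shows "in_L n (\<lambda>i. A i j)"
proof -
  have "in_L n (mat_vec n A (\<lambda>t. if t \<in> {j} then 1 else 0))"
    using assms in_L_indicator_pair[of n j j] not_cyc_adj_refl unfolding L_good_def by auto
  moreover have "mat_vec n A (\<lambda>t. if t \<in> {j} then 1 else 0) = (\<lambda>i. A i j)"
    using mat_vec_indicator[of "{j}" n A] assms(3) by (metis add.right_neutral empty_iff empty_subsetI finite.emptyI insert_subset sum.empty sum.insert)
  ultimately show ?thesis
    by simp
qed

theorem lemma4:
  fixes n :: nat and A :: "nat \<Rightarrow> nat \<Rightarrow> bit" and i j i' k :: nat
  assumes "n \<ge> 2"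
    and "L_good n A"
    and "i \<in> {1..n}" and "j \<in> {1..n}" and "i' \<in> {1..n}" and "k \<in> {1..n}"
    and "A i j = 1"
    and "cyc_adj n i i'"
    and "A i' k = 1"
  shows "cyc_adj n j k"
proof (rule ccontr)
  assume not_adj: "\<not> cyc_adj n j k"
  have "A i' j = 0"
    using in_L_no_adjacent_ones[OF assms(1) L_good_column_in_L[OF assms(1,2,4)] assms(3,5,8)]
      assms(7) by simp
  moreover have "A i k = 0"
    using in_L_no_adjacent_ones[OF assms(1) L_good_column_in_L[OF assms(1,2,6)] assms(3,5,8)]
      assms(9) by simp
  ultimately have "j \<noteq> k"
    using assms(9) by auto
  have "in_L n (mat_vec n A (\<lambda>t. if t \<in> {j, k} then 1 else 0))"
    using assms(2) in_L_indicator_pair[OF assms(1,4,6) not_adj] unfolding L_good_def by blast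
  moreover have "mat_vec n A (\<lambda>t. if t \<in> {j, k} then 1 else 0) = (\<lambda>t. A t j + A t k)"
    using mat_vec_indicator[of "{j, k}" n A] assms(4,6) \<open>j \<noteq> k\<close> by simp
  ultimately have "A i' j + A i' k = 0"
    using in_L_no_adjacent_ones[OF assms(1) _ assms(3,5,8), of "\<lambda>t. A t j + A t k"]
      \<open>A i k = 0\<close> assms(7) by simp
  with \<open>A i' j = 0\<close> assms(9) show False
    by simp
qed

end
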